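(* Suppose Assumptions (A1) and (A2) hold, $C>C^*$, and $\mathcal{S}_E\cap\mathcal{S}_P=\emptyset$. Then: (i) for every nonempty $\mathscr{S}\in\mathcal{A}(k)$, $$\inf_{T\in\mathcal{T}^{1/2}_{\mathscr{S}}}\sup_{\tau\in\mathrm{Lip}_C(\mathbb{R}^d)}\mathcal{R}(T,\mathscr{S},\tau)=\frac{C}{2}\,\frac{1}{\#\mathcal{S}_P}\sum_{s\in\mathcal{S}_P}\|X_s-X_{N_{\mathscr{S}}(s)}\|;$$ (ii) consequently, any nonempty $\mathscr{S}^*\in\mathcal{A}(k)$ minimizing $\sum_{s\in\mathcal{S}_P}\|X_s-X_{N_{\mathscr{S}}(s)}\|$ over nonempty $\mathscr{S}\in\mathcal{A}(k)$ (a $k$-median solution) also minimizes $\inf_{T\in\mathcal{T}^{1/2}_{\mathscr{S}}}\sup_{\tau\in\mathrm{Lip}_C(\mathbb{R}^d)}\mathcal{R}(T,\mathscr{S},\tau)$ over nonempty $\mathscr{S}\in\mathcal{A}(k)$.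
   Context: Sites are indexed by $\mathcal{S}=\{1,\dots,S\}$. $\mathcal{S}_E\subseteq\mathcal{S}$ has $\mathrm{card}(\mathcal{S}_E)\ge2$, and $\mathcal{S}_P\subseteq\mathcal{S}$ is nonempty, with $\#\mathcal{S}_P=\mathrm{card}(\mathcal{S}_P)$. Each site $s$ has covariates $X_s\in\mathbb{R}^d$ and a known standard deviation $\sigma_s>0$. $\|\cdot\|$ is the Euclidean norm, and $\mathrm{Lip}_C(\mathbb{R}^d)$ is the set of $C$-Lipschitz functions $\mathbb{R}^d\to\mathbb{R}$ with respect to $\|\cdot\|$, where $C>0$. (A1): the true conditional treatment effect function $\tau$ lies in $\mathrm{Lip}_C(\mathbb{R}^d)$. (A2): the $X_s$ are pairwise distinct. Fix an integer $1\le k<\mathrm{card}(\mathcal{S}_E)$ and set $\mathcal{A}(k)=\{\mathscr{S}\subset\mathcal{S}_E:\mathrm{card}(\mathscr{S})\le k\}$. For a nonempty $\mathscr{S}$ with elements $\mathscr{S}_1<\dots<\mathscr{S}_m$, the data are $\hat\tau_{\mathscr{S}}\sim\mathcal{N}_m(\tau_{\mathscr{S}},\mathrm{diag}(\sigma^2_{\mathscr{S}_1},\dots,\sigma^2_{\mathscr{S}_m}))$, where $\tau_{\mathscr{S}}=(\tau(X_{\mathscr{S}_i}))_{i=1}^m$. A treatment rule is a measurable map $T:\mathbb{R}^m\to[0,1]^{\#\mathcal{S}_P}$. $\mathcal{T}^{1/2}_{\mathscr{S}}$ is the set of treatment rules with $\mathbb{E}[T_s(U)]=1/2$ for all $s\in\mathcal{S}_P$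 whenever $U\sim\mathcal{N}_m(0,\Sigma)$, for every positive definite diagonal $\Sigma$. Regret is $\mathcal{R}(T,\mathscr{S},\tau)=\frac{1}{\#\mathcal{S}_P}\sum_{s\in\mathcal{S}_P}\tau(X_s)\big(\mathbf{1}\{\tau(X_s)\ge0\}-\mathbb{E}_{\tau_{\mathscr{S}}}[T_s(\hat\tau_{\mathscr{S}})]\big)$. $N_{\mathscr{S}}(s)$ is the nearest neighbor of $s$ in $\mathscr{S}$ in Euclidean distance of covariates, with the smallest index chosen under ties. $C^*=\max\{\sqrt{\pi/2}\,\sigma_{N_{\mathscr{S}}(s)}/\|X_s-X_{N_{\mathscr{S}}(s)}\|:\mathscr{S}\in\mathcal{A}(k)\text{ nonempty},\ s\in\mathcal{S}_P\setminus\mathscr{S}\}$. *)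

theory Defs
  imports "HOL-Probability.Probability"
begin

text \<open>Sampling distribution of the estimates at the sites of \<open>Sc\<close>: independent
  normals with means \<open>mu i\<close> and standard deviations \<open>sd i\<close>, indexed by the sites
  of \<open>Sc\<close> (equivalent to the vector indexed by the sorted elements of \<open>Sc\<close>).\<close>
definition data_measure :: "(nat \<Rightarrow> real) \<Rightarrow> (nat \<Rightarrow> real) \<Rightarrow> nat set \<Rightarrow> (nat \<Rightarrow> real) measure" where
  "data_measure sd mu Sc = PiM Sc (\<lambda>i. density lborel (normal_density (mu i) (sd i)))"

definition treatment_rule :: "nat set \<Rightarrow> nat set \<Rightarrow> ((nat \<Rightarrow> real) \<Rightarrow> nat \<Rightarrow> real) \<Rightarrow> bool" where
  "treatment_rule SP Sc T \<longleftrightarrow>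
     (\<forall>s\<in>SP. (\<lambda>u. T u s) \<in> borel_measurable (PiM Sc (\<lambda>_. borel))
           \<and> (\<forall>u\<in>space (PiM Sc (\<lambda>_. borel)). 0 \<le> T u s \<and> T u s \<le> 1))"

definition half_rules :: "nat set \<Rightarrow> nat set \<Rightarrow> ((nat \<Rightarrow> real) \<Rightarrow> nat \<Rightarrow> real) set" where
  "half_rules SP Sc = {T. treatment_rule SP Sc T \<and>
     (\<forall>sd. (\<forall>i\<in>Sc. 0 < sd i) \<longrightarrow>
        (\<forall>s\<in>SP. (\<integral>u. T u s \<partial>(data_measure sd (\<lambda>_. 0) Sc)) = 1/2))}"

definition regret :: "nat set \<Rightarrow> (nat \<Rightarrow> 'a) \<Rightarrow> (nat \<Rightarrow> real) \<Rightarrow> nat set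
     \<Rightarrow> ((nat \<Rightarrow> real) \<Rightarrow> nat \<Rightarrow> real) \<Rightarrow> ('a \<Rightarrow> real) \<Rightarrow> real" where
  "regret SP X sdv Sc T tau =
     (1 / real (card SP)) * (\<Sum>s\<in>SP. tau (X s) *
        ((if tau (X s) \<ge> 0 then 1 else 0)
         - (\<integral>u. T u s \<partial>(data_measure sdv (\<lambda>i. tau (X i)) Sc))))"

definition minimax_regret :: "real \<Rightarrow> nat set \<Rightarrow> (nat \<Rightarrow> 'a::metric_space) \<Rightarrow> (nat \<Rightarrow> real)
     \<Rightarrow> nat set \<Rightarrow> ereal" where
  "minimax_regret C SP X sdv Sc =
     (INF T\<in>half_rules SP Sc. SUP tau\<in>{tau. C-lipschitz_on UNIV tau}.
        ereal (regret SP X sdv Sc T tau))"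

definition NN :: "(nat \<Rightarrow> 'a::metric_space) \<Rightarrow> nat set \<Rightarrow> nat \<Rightarrow> nat" where
  "NN X Sc s = (LEAST j. j \<in> Sc \<and> (\<forall>i\<in>Sc. dist (X s) (X j) \<le> dist (X s) (X i)))"

definition Acal :: "nat set \<Rightarrow> nat \<Rightarrow> nat set set" where
  "Acal SE k = {Sc. Sc \<subseteq> SE \<and> card Sc \<le> k}"

definition Cstar :: "nat set \<Rightarrow> nat set \<Rightarrow> nat \<Rightarrow> (nat \<Rightarrow> 'a::real_normed_vector) \<Rightarrow> (nat \<Rightarrow> real) \<Rightarrow> real" where
  "Cstar SE SP k X sdv = Max {sqrt (pi/2) * sdv (NN X Sc s) / norm (X s - X (NN X Sc s)) | Sc s.
       Sc \<in> Acal SE k \<and> Sc \<noteq> {} \<and> s \<in> SP - Sc}"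

end

theory Submission
  imports Defs
begin

text \<open>
  For a site \<open>s\<close> at distance \<open>\<delta>\<close> from its nearest experimental neighbour \<open>j\<close>, the Lipschitz
  bound only gives \<open>|\<tau>(X\<^sub>s) - \<tau>(X\<^sub>j)| \<le> C\<delta>\<close>. The lower bound uses \<open>\<tau> = C \<cdot> dist(\<cdot>, X`Sc)\<close>:
  it vanishes on the experimental sites, so every rule in \<open>T\<^sup>1\<^sup>/\<^sup>2\<close> treats with probability
  \<open>1/2\<close> and loses \<open>C\<delta>/2\<close> at each site. For the upper bound, the rule treating \<open>s\<close> with
  probability \<open>\<Phi>(\<tau>\<^sub>j/\<rho>)\<close> has, after averaging over the noise \<open>\<sigma>\<^sub>j\<close>, expected treatment
  \<open>\<Phi>(\<tau>(X\<^sub>j)/\<sqrt>(\<sigma>\<^sub>j\<^sup>2 + \<rho>\<^sup>2))\<close>; the condition \<open>C > C\<^sup>*\<close> is exactly what allows \<open>\<rho>\<close> to be chosen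
  with \<open>\<sqrt>(\<sigma>\<^sub>j\<^sup>2 + \<rho>\<^sup>2) = C\<delta> \<sqrt>(2/\<pi>)\<close>, and at this scale the elementary inequality
  \<open>(1 + \<sqrt>(2/\<pi>) x)(1 - \<Phi> x) \<le> 1/2\<close> bounds the regret at \<open>s\<close> by \<open>C\<delta>/2\<close> whatever \<open>\<tau>\<close> is.
\<close>

section \<open>The standard normal distribution function\<close>

abbreviation normal_measure :: "real \<Rightarrow> real \<Rightarrow> real measure" where
  "normal_measure \<mu> \<sigma> \<equiv> density lborel (normal_density \<mu> \<sigma>)"

definition Phi :: "real \<Rightarrow> real" where
  "Phi = cdf (normal_measure 0 1)"

interpretation std_normal: real_distribution "normal_measure 0 1"
  by (intro real_distribution.intro prob_space_normal_density real_distribution_axioms.intro) simp_all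

lemma Phi_mono: "x \<le> y \<Longrightarrow> Phi x \<le> Phi y"
  unfolding Phi_def by (rule std_normal.cdf_nondecreasing)

lemma Phi_nonneg: "0 \<le> Phi x"
  unfolding Phi_def by (rule std_normal.cdf_nonneg)

lemma Phi_le_1: "Phi x \<le> 1"
  unfolding Phi_def by (rule std_normal.cdf_bounded_prob)

lemma Phi_at_top: "(Phi \<longlongrightarrow> 1) at_top"
  unfolding Phi_def by (rule std_normal.cdf_lim_at_top_prob)

lemma Phi_at_bot: "(Phi \<longlongrightarrow> 0) at_bot"
  unfolding Phi_def by (rule std_normal.cdf_lim_at_bot)

lemma measure_std_normal:
  assumes "A \<in> sets borel"
  shows "measure (normal_measure 0 1) A = (LBINT y:A. std_normal_density y)"
proof -
  have int: "integrable lborel (\<lambda>y. indicat_real A y * std_normal_density y)"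
    using integrable_mult_indicator[of A lborel std_normal_density] assms by simp
  have "emeasure (normal_measure 0 1) A
      = (\<integral>\<^sup>+ y. ennreal (indicator A y * std_normal_density y) \<partial>lborel)"
    using assms by (subst emeasure_density) (auto intro!: nn_integral_cong simp: indicator_def)
  also have "\<dots> = ennreal (LBINT y:A. std_normal_density y)"
    unfolding set_lebesgue_integral_def by (subst nn_integral_eq_integral[OF int]) auto
  finally show ?thesis
    unfolding measure_def by (simp add: set_lebesgue_integral_def)
qed

lemma Phi_diff:
  assumes "x \<le> y"
  shows "Phi y - Phi x = (LBINT t=x..y. std_normal_density t)"
proof -
  have "{..y} = {..x} \<union> {x<..y}" using assms by auto
  then have "Phi y = Phi x + measure (normal_measure 0 1) {x<..y}"
    unfolding Phi_def cdf_def2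
    using std_normal.finite_measure_Union[of "{..x}" "{x<..y}"] by (auto simp: disjoint_iff)
  then show ?thesis
    using assms by (simp add: measure_std_normal interval_integral_Ioc)
qed

lemma Phi_eq_integral: "Phi x = Phi 0 + (LBINT t=ereal 0..x. std_normal_density t)"
proof (cases "0 \<le> x")
  case True
  then show ?thesis using Phi_diff[of 0 x] by simp
next
  case False
  then show ?thesis
    using Phi_diff[of x 0] by (simp add: interval_integral_endpoints_reverse[of "ereal 0" x])
qed

lemma has_real_derivative_Phi: "(Phi has_real_derivative std_normal_density x) (at x)"
proof -
  define a b where "a = - \<bar>x\<bar> - 1" and "b = \<bar>x\<bar> + 1"
  have "continuous_on {a..b} std_normal_density"
    unfolding normal_density_def by (intro continuous_intros) auto
  then have "((\<lambda>u. LBINT t=ereal 0..u. std_normal_density t)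
      has_vector_derivative std_normal_density x) (at x within {a..b})"
    by (intro interval_integral_FTC2) (auto simp: a_def b_def)
  then have "((\<lambda>u. LBINT t=ereal 0..u. std_normal_density t)
      has_vector_derivative std_normal_density x) (at x)"
    by (simp add: at_within_Icc_at a_def b_def)
  then have "((\<lambda>u. Phi 0 + (LBINT t=ereal 0..u. std_normal_density t))
      has_real_derivative std_normal_density x) (at x)"
    by (auto intro!: derivative_eq_intros simp: has_real_derivative_iff_has_vector_derivative)
  then show ?thesis by (simp flip: Phi_eq_integral)
qed

lemma isCont_Phi: "isCont Phi x"
  using has_real_derivative_Phi DERIV_isCont by blast

lemma Phi_scaled_measurable: "(\<lambda>x. Phi (x / r)) \<in> borel_measurable borel"
proof -
  have "continuous_on UNIV (\<lambda>x. Phi (x * (1 / r)))"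
    by (intro continuous_at_imp_continuous_on ballI continuous_intros isCont_o2[OF _ isCont_Phi])
  then show ?thesis by (simp add: borel_measurable_continuous_onI)
qed

lemma has_real_derivative_std_normal_density:
  "(std_normal_density has_real_derivative (- x * std_normal_density x)) (at x)"
proof -
  have "((\<lambda>x. exp (- x\<^sup>2 / 2)) has_real_derivative (exp (- x\<^sup>2 / 2) * (- x))) (at x)"
    by (auto intro!: derivative_eq_intros)
  from DERIV_cmult[OF this, of "1 / sqrt (2 * pi)"] show ?thesis
    by (simp add: std_normal_density_def[abs_def] std_normal_density_def algebra_simps)
qed

lemma std_normal_density_pos: "0 < std_normal_density x"
  by (simp add: normal_density_pos)

lemma std_normal_density_le_1: "std_normal_density y \<le> 1"
proof -
  have "sqrt 1 \<le> sqrt (2 * pi)" using pi_gt3 by (intro real_sqrt_le_mono) simp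
  then have "1 \<le> sqrt (2 * pi)" by simp
  moreover have "exp (- y\<^sup>2 / 2) \<le> 1" by simp
  ultimately have "exp (- y\<^sup>2 / 2) \<le> sqrt (2 * pi)" by linarith
  then show ?thesis unfolding std_normal_density_def by (simp add: field_simps)
qed

lemma Phi_minus: "Phi (- x) = 1 - Phi x"
proof -
  define f where "f x = Phi x + Phi (- x)" for x
  have "DERIV f x :> std_normal_density x + std_normal_density (- x) * (- 1)" for x
    unfolding f_def by (auto intro!: derivative_eq_intros has_real_derivative_Phi[THEN DERIV_chain2])
  moreover have "std_normal_density (- x) = std_normal_density x" for x
    by (simp add: std_normal_density_def)
  ultimately have const: "f y = f 0" for y
    by (intro DERIV_isconst_all) auto
  have "(f \<longlongrightarrow> 1 + 0) at_top"
    unfolding f_def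
    by (intro tendsto_add Phi_at_top filterlim_compose[OF Phi_at_bot] filterlim_uminus_at_bot_at_top)
  moreover have "f = (\<lambda>_. f 0)"
    using const by blast
  ultimately have "((\<lambda>_::real. f 0) \<longlongrightarrow> 1) at_top"
    by simp
  then have "f 0 = 1" by (simp add: tendsto_const_iff)
  then show ?thesis using const[of x] unfolding f_def by simp
qed

lemma Phi_0: "Phi 0 = 1/2"
  using Phi_minus[of 0] by simp

text \<open>Mills' ratio: \<open>\<phi>(y)/y - (1 - \<Phi> y)\<close> is decreasing with limit \<open>0\<close> at infinity.\<close>
lemma one_minus_Phi_le:
  assumes "0 < x"
  shows "1 - Phi x \<le> std_normal_density x / x"
proof -
  define K where "K y = std_normal_density y / y - (1 - Phi y)" for y
  have antimono: "K y \<le> K x" if "x \<le> y" for y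
  proof (rule DERIV_nonpos_imp_nonincreasing[OF that])
    fix z assume z: "x \<le> z" "z \<le> y"
    then have "z \<noteq> 0" using assms by auto
    have "DERIV K z :> ((- z * std_normal_density z) * z - std_normal_density z * 1) / (z * z)
        + std_normal_density z"
      unfolding K_def using \<open>z \<noteq> 0\<close>
      by (auto intro!: derivative_eq_intros has_real_derivative_std_normal_density
          has_real_derivative_Phi)
    moreover have "((- z * std_normal_density z) * z - std_normal_density z * 1) / (z * z)
        + std_normal_density z = - std_normal_density z / (z * z)"
      using \<open>z \<noteq> 0\<close> by (simp add: field_simps)
    moreover have "- std_normal_density z / (z * z) \<le> 0"
      using std_normal_density_pos[of z] by (simp add: divide_nonpos_pos)
    ultimately show "\<exists>d. DERIV K z :> d \<and> d \<le> 0" by auto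
  qed
  have "((\<lambda>y. std_normal_density y / y) \<longlongrightarrow> 0) at_top"
  proof (rule tendsto_sandwich[of "\<lambda>_. 0" _ _ inverse])
    show "\<forall>\<^sub>F y in at_top. 0 \<le> std_normal_density y / y"
      using eventually_gt_at_top[of 0] by eventually_elim simp
    show "\<forall>\<^sub>F y in at_top. std_normal_density y / y \<le> inverse y"
      using eventually_gt_at_top[of 0] by eventually_elim
        (simp add: divide_right_mono inverse_eq_divide std_normal_density_le_1)
  qed (use tendsto_inverse_0_at_top[OF filterlim_ident] in simp_all)
  then have "(K \<longlongrightarrow> 0 - (1 - 1)) at_top"
    unfolding K_def by (intro tendsto_intros Phi_at_top)
  moreover have "eventually (\<lambda>y. K y \<le> K x) at_top"
    unfolding eventually_at_top_linorder using antimono by blast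
  ultimately have "0 \<le> K x"
    using tendsto_upperbound by fastforce
  then show ?thesis unfolding K_def by simp
qed

section \<open>A tail inequality for the normal distribution\<close>

definition kappa :: real where
  "kappa = 2 * std_normal_density 0"

lemma kappa_eq: "kappa = 1 / sqrt (pi / 2)"
proof -
  have "sqrt (2 * pi) = sqrt (2\<^sup>2 * (pi / 2))" by (simp add: power2_eq_square)
  also have "\<dots> = sqrt (2\<^sup>2) * sqrt (pi / 2)" by (rule real_sqrt_mult)
  finally show ?thesis unfolding kappa_def std_normal_density_def by simp
qed

lemma kappa_bounds: "1/2 \<le> kappa" "kappa \<le> 1"
proof -
  have "sqrt (2 * pi) \<le> sqrt 16" using pi_less_4 by (intro real_sqrt_le_mono) simp
  moreover have "sqrt 4 \<le> sqrt (2 * pi)" using pi_gt3 by (intro real_sqrt_le_mono) simp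
  ultimately have "sqrt (2 * pi) \<le> 4" "2 \<le> sqrt (2 * pi)" by simp_all
  then show "1/2 \<le> kappa" "kappa \<le> 1"
    unfolding kappa_def std_normal_density_def by (simp_all add: field_simps)
qed

definition kappa_tail :: "real \<Rightarrow> real" where
  "kappa_tail x = (1 + kappa * x) * (1 - Phi x)"

definition kappa_tail_slope :: "real \<Rightarrow> real" where
  "kappa_tail_slope x = std_normal_density x * (1 + kappa * x) - kappa * (1 - Phi x)"

lemma has_real_derivative_kappa_tail: "DERIV kappa_tail x :> - kappa_tail_slope x"
proof -
  have "DERIV kappa_tail x :> kappa * (1 - Phi x) + (1 + kappa * x) * (- std_normal_density x)"
    unfolding kappa_tail_def by (auto intro!: derivative_eq_intros has_real_derivative_Phi)
  then show ?thesis unfolding kappa_tail_slope_def by (simp add: algebra_simps)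
qed

lemma has_real_derivative_kappa_tail_slope:
  "DERIV kappa_tail_slope x :> std_normal_density x * (2 * kappa - x - kappa * x\<^sup>2)"
proof -
  have "DERIV kappa_tail_slope x :> (- x * std_normal_density x) * (1 + kappa * x)
      + std_normal_density x * kappa - kappa * (- std_normal_density x)"
    unfolding kappa_tail_slope_def
    by (auto intro!: derivative_eq_intros has_real_derivative_std_normal_density
        has_real_derivative_Phi)
  then show ?thesis by (simp add: algebra_simps power2_eq_square)
qed

lemma kappa_tail_slope_increasing_on:
  assumes "x \<le> y" and "\<And>z. x \<le> z \<Longrightarrow> z \<le> y \<Longrightarrow> 0 \<le> 2 * kappa - z - kappa * z\<^sup>2"
  shows "kappa_tail_slope x \<le> kappa_tail_slope y"
proof (rule DERIV_nonneg_imp_nondecreasing[OF assms(1)])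
  fix z assume "x \<le> z" "z \<le> y"
  then show "\<exists>d. DERIV kappa_tail_slope z :> d \<and> 0 \<le> d"
    using assms(2) has_real_derivative_kappa_tail_slope std_normal_density_pos
    by (blast intro: mult_nonneg_nonneg less_imp_le)
qed

lemma kappa_tail_slope_0: "kappa_tail_slope 0 = 0"
  unfolding kappa_tail_slope_def kappa_def Phi_0 by simp

text \<open>Left of \<open>-1/\<kappa>\<close> both terms are nonpositive; on \<open>[-1/\<kappa>, 0]\<close> the slope increases to \<open>0\<close>.\<close>
lemma kappa_tail_slope_nonpos:
  assumes "x \<le> 0"
  shows "kappa_tail_slope x \<le> 0"
proof (cases "1 + kappa * x \<le> 0")
  case True
  then have "std_normal_density x * (1 + kappa * x) \<le> 0"
    using std_normal_density_pos[of x] by (simp add: mult_nonneg_nonpos)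
  moreover have "0 \<le> kappa * (1 - Phi x)"
    using Phi_le_1[of x] kappa_bounds by simp
  ultimately show ?thesis unfolding kappa_tail_slope_def by simp
next
  case False
  have "kappa_tail_slope x \<le> kappa_tail_slope 0"
  proof (rule kappa_tail_slope_increasing_on[OF assms])
    fix z assume z: "x \<le> z" "z \<le> 0"
    then have "1 + kappa * x \<le> 1 + kappa * z"
      using kappa_bounds by (simp add: mult_left_mono)
    then have "z * (1 + kappa * z) \<le> 0"
      using False z by (simp add: mult_nonpos_nonneg)
    then show "0 \<le> 2 * kappa - z - kappa * z\<^sup>2"
      using kappa_bounds by (simp add: algebra_simps power2_eq_square)
  qed
  then show ?thesis using kappa_tail_slope_0 by simp
qed

text \<open>On \<open>[0, 7/10]\<close> the slope increases from \<open>0\<close>; beyond, Mills' ratio takes over.\<close>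
lemma kappa_tail_slope_nonneg:
  assumes "0 \<le> x"
  shows "0 \<le> kappa_tail_slope x"
proof (cases "x \<le> 7/10")
  case True
  have "kappa_tail_slope 0 \<le> kappa_tail_slope x"
  proof (rule kappa_tail_slope_increasing_on[OF assms])
    fix z assume z: "0 \<le> z" "z \<le> x"
    have "z * z \<le> 7/10 * (7/10)" using z True by (intro mult_mono) auto
    then have "kappa * (z * z) \<le> kappa * (49/100)"
      using kappa_bounds by (intro mult_left_mono) auto
    then have "0 \<le> 2 * kappa - z - kappa * (z * z)"
      using kappa_bounds z True by linarith
    then show "0 \<le> 2 * kappa - z - kappa * z\<^sup>2"
      by (simp add: power2_eq_square)
  qed
  then show ?thesis using kappa_tail_slope_0 by simp
next
  case False
  then have "0 < x" by simp
  have "x * x \<ge> 7/10 * (7/10)" using False by (intro mult_mono) auto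
  then have "kappa * (x * x) \<ge> kappa * (49/100)"
    using kappa_bounds by (intro mult_left_mono) auto
  then have "0 \<le> x + kappa * (x * x) - kappa"
    using kappa_bounds False by linarith
  then have "0 \<le> x + kappa * x * x - kappa"
    by (simp add: mult.assoc)
  then have "0 \<le> std_normal_density x * (x + kappa * x * x - kappa) / x"
    using std_normal_density_pos[of x] \<open>0 < x\<close> by simp
  also have "\<dots> = std_normal_density x * (1 + kappa * x) - kappa * (std_normal_density x / x)"
    using \<open>0 < x\<close> by (simp add: field_simps)
  also have "\<dots> \<le> kappa_tail_slope x"
    unfolding kappa_tail_slope_def
    using mult_left_mono[OF one_minus_Phi_le[OF \<open>0 < x\<close>], of kappa] kappa_bounds by simp
  finally show ?thesis .
qed

lemma kappa_tail_le_half: "kappa_tail x \<le> 1/2"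
proof -
  have "kappa_tail x \<le> kappa_tail 0"
  proof (cases "x \<le> 0")
    case True
    show ?thesis
    proof (rule DERIV_nonneg_imp_nondecreasing[OF True])
      fix z assume "x \<le> z" "z \<le> 0"
      then show "\<exists>d. DERIV kappa_tail z :> d \<and> 0 \<le> d"
        using has_real_derivative_kappa_tail kappa_tail_slope_nonpos by force
    qed
  next
    case False
    show ?thesis
    proof (rule DERIV_nonpos_imp_nonincreasing[of 0 x])
      fix z assume "0 \<le> z" "z \<le> x"
      then show "\<exists>d. DERIV kappa_tail z :> d \<and> d \<le> 0"
        using has_real_derivative_kappa_tail kappa_tail_slope_nonneg by force
    qed (use False in simp)
  qed
  then show ?thesis unfolding kappa_tail_def Phi_0 by simp
qed

lemma regret_at_site_le:
  assumes "0 < a" and "\<bar>t - m\<bar> \<le> a"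
  shows "t * ((if 0 \<le> t then 1 else 0) - Phi (sqrt (pi / 2) * m / a)) \<le> a / 2"
proof -
  have ak: "0 < a * kappa" using assms(1) kappa_bounds by simp
  have m: "sqrt (pi / 2) * m / a = m / (a * kappa)"
    unfolding kappa_eq by simp
  show ?thesis
  proof (cases "0 \<le> t")
    case True
    define x where "x = (t - a) / (a * kappa)"
    have scaled: "t = a * (1 + kappa * x)"
      unfolding x_def using assms(1) kappa_bounds by (simp add: field_simps)
    have "Phi x \<le> Phi (m / (a * kappa))"
      unfolding x_def using assms(2) ak by (intro Phi_mono divide_right_mono) auto
    then have "t * (1 - Phi (m / (a * kappa))) \<le> t * (1 - Phi x)"
      using True by (intro mult_left_mono) auto
    also have "\<dots> = a * kappa_tail x"
      using scaled unfolding kappa_tail_def by simp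
    also have "\<dots> \<le> a / 2"
      using assms(1) kappa_tail_le_half[of x] by simp
    finally show ?thesis using True m by simp
  next
    case False
    define x where "x = (- t - a) / (a * kappa)"
    have scaled: "- t = a * (1 + kappa * x)"
      unfolding x_def using assms(1) kappa_bounds by (simp add: field_simps)
    have "- x = (t + a) / (a * kappa)"
      unfolding x_def by (simp add: diff_divide_distrib add_divide_distrib)
    then have "Phi (m / (a * kappa)) \<le> Phi (- x)"
      using assms(2) ak by (auto intro!: Phi_mono divide_right_mono)
    then have "(- t) * Phi (m / (a * kappa)) \<le> (- t) * (1 - Phi x)"
      using False Phi_minus[of x] by (intro mult_left_mono) auto
    also have "\<dots> = a * kappa_tail x"
      using scaled unfolding kappa_tail_def by simp
    also have "\<dots> \<le> a / 2"
      using assms(1) kappa_tail_le_half[of x] by simp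
    finally show ?thesis using False m by simp
  qed
qed

section \<open>Averaging a probit rule over normal noise\<close>

lemma measure_normal_atMost:
  assumes "0 < \<sigma>"
  shows "measure (normal_measure \<mu> \<sigma>) {..x} = Phi ((x - \<mu>) / \<sigma>)"
proof -
  interpret prob_space "normal_measure \<mu> \<sigma>"
    using assms by (rule prob_space_normal_density)
  let ?z = "\<lambda>x. (x - \<mu>) / \<sigma>"
  have "distributed (normal_measure \<mu> \<sigma>) lborel (\<lambda>x. x) (normal_density \<mu> \<sigma>)"
    unfolding distributed_def by (simp add: distr_id2)
  then have z: "distributed (normal_measure \<mu> \<sigma>) lborel ?z std_normal_density"
    using normal_standard_normal_convert[OF assms] by simp
  have "Phi (?z x) = measure (distr (normal_measure \<mu> \<sigma>) lborel ?z) {..?z x}"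
    unfolding Phi_def cdf_def2 using distributed_distr_eq_density[OF z] by simp
  also have "\<dots> = measure (normal_measure \<mu> \<sigma>) (?z -` {..?z x} \<inter> space (normal_measure \<mu> \<sigma>))"
    by (rule measure_distr) (use distributed_measurable[OF z] in auto)
  also have "?z -` {..?z x} \<inter> space (normal_measure \<mu> \<sigma>) = {..x}"
    using assms by (auto simp: divide_le_cancel)
  finally show ?thesis by simp
qed

lemma (in prob_space) distr_pair_snd:
  assumes "prob_space N"
  shows "distr (M \<Otimes>\<^sub>M N) N snd = N"
proof (intro measure_eqI)
  interpret N: prob_space N by fact
  interpret pair_sigma_finite M N ..
  fix A assume A: "A \<in> sets (distr (M \<Otimes>\<^sub>M N) N snd)"
  then have "emeasure (distr (M \<Otimes>\<^sub>M N) N snd) A = emeasure (M \<Otimes>\<^sub>M N) (space M \<times> A)"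
    by (auto simp: emeasure_distr space_pair_measure dest: sets.sets_into_space
        intro!: arg_cong2[where f=emeasure])
  with A show "emeasure (distr (M \<Otimes>\<^sub>M N) N snd) A = emeasure N A"
    by (simp add: N.emeasure_pair_measure_Times emeasure_space_1)
qed simp

text \<open>With \<open>x \<sim> N(0,\<rho>)\<close> and \<open>u \<sim> N(\<mu>,\<sigma>)\<close> independent, \<open>x - u \<sim> N(-\<mu>, \<surd>(\<rho>\<^sup>2 + \<sigma>\<^sup>2))\<close>.\<close>
lemma measure_pair_normal_le:
  assumes "0 < \<sigma>" and "0 < \<rho>"
  shows "measure (normal_measure 0 \<rho> \<Otimes>\<^sub>M normal_measure \<mu> \<sigma>) {p. fst p \<le> snd p}
    = Phi (\<mu> / sqrt (\<sigma>\<^sup>2 + \<rho>\<^sup>2))"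
proof -
  let ?P1 = "normal_measure \<mu> \<sigma>" and ?P2 = "normal_measure 0 \<rho>"
  let ?M = "?P2 \<Otimes>\<^sub>M ?P1"
  interpret P1: prob_space ?P1 using assms(1) by (rule prob_space_normal_density)
  interpret P2: prob_space ?P2 using assms(2) by (rule prob_space_normal_density)
  interpret M: pair_prob_space ?P2 ?P1 ..
  have sets_M: "sets ?M = sets (borel \<Otimes>\<^sub>M borel)"
    by (intro sets_pair_measure_cong) auto
  have fst: "fst \<in> measurable ?M borel" and snd: "snd \<in> measurable ?M borel"
    using measurable_fst[of ?P2 ?P1] measurable_snd[of ?P2 ?P1]
      measurable_cong_sets[of ?M ?M ?P2 borel] measurable_cong_sets[of ?M ?M ?P1 borel]
    by simp_all
  have distr_fst: "distr ?M borel fst = ?P2"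
    using P1.distr_pair_fst[of ?P2] by (subst distr_cong[of _ ?M borel ?P2]) auto
  have distr_snd: "distr ?M borel snd = ?P1"
    using P2.distr_pair_snd[OF P1.prob_space_axioms]
    by (subst distr_cong[of _ ?M borel ?P1]) auto
  have "M.indep_var borel fst borel snd"
    using fst snd sets_M by (subst M.indep_var_distribution_eq) (simp add: distr_fst distr_snd distr_id2)
  moreover have "distributed ?M lborel fst (normal_density 0 \<rho>)"
    "distributed ?M lborel snd (normal_density \<mu> \<sigma>)"
    unfolding distributed_def using fst snd distr_fst distr_snd
    by (simp_all add: distr_cong[of ?M ?M lborel borel])
  ultimately have diff: "distributed ?M lborel (\<lambda>x. fst x - snd x)
      (normal_density (0 - \<mu>) (sqrt (\<rho>\<^sup>2 + \<sigma>\<^sup>2)))"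
    using assms by (intro M.diff_indep_normal) simp_all
  have "{p. fst p \<le> snd p} = (\<lambda>x. fst x - snd x) -` {..0::real} \<inter> space ?M"
    by (auto simp: space_pair_measure)
  then have "measure ?M {p. fst p \<le> snd p}
      = measure (distr ?M lborel (\<lambda>x. fst x - snd x)) {..0}"
    using distributed_measurable[OF diff] by (simp add: measure_distr)
  also have "\<dots> = Phi (\<mu> / sqrt (\<sigma>\<^sup>2 + \<rho>\<^sup>2))"
    using distributed_distr_eq_density[OF diff] add_pos_pos[of "\<rho>\<^sup>2" "\<sigma>\<^sup>2"] assms
      measure_normal_atMost[of "sqrt (\<rho>\<^sup>2 + \<sigma>\<^sup>2)" "0 - \<mu>" 0]
    by (simp add: add.commute)
  finally show ?thesis .
qed

lemma measure_pair_normal_le_eq_integral: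
  assumes "0 < \<sigma>" and "0 < \<rho>"
  shows "measure (normal_measure 0 \<rho> \<Otimes>\<^sub>M normal_measure \<mu> \<sigma>) {p. fst p \<le> snd p}
    = (\<integral>u. Phi (u / \<rho>) \<partial>normal_measure \<mu> \<sigma>)"
proof -
  let ?P1 = "normal_measure \<mu> \<sigma>" and ?P2 = "normal_measure 0 \<rho>"
  let ?M = "?P2 \<Otimes>\<^sub>M ?P1" and ?A = "{p::real \<times> real. fst p \<le> snd p}"
  interpret P1: prob_space ?P1 using assms(1) by (rule prob_space_normal_density)
  interpret P2: prob_space ?P2 using assms(2) by (rule prob_space_normal_density)
  interpret M: pair_prob_space ?P2 ?P1 ..
  have "?A = {p \<in> space (borel \<Otimes>\<^sub>M borel). fst p \<le> snd p}"
    by (simp add: space_pair_measure)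
  also have "\<dots> \<in> sets (borel \<Otimes>\<^sub>M borel)" by measurable
  finally have A: "?A \<in> sets ?M"
    by (subst sets_pair_measure_cong[of ?P2 borel ?P1 borel]) auto
  have "emeasure ?M ?A = (\<integral>\<^sup>+u. emeasure ?P2 ((\<lambda>x. (x, u)) -` ?A) \<partial>?P1)"
    by (rule M.emeasure_pair_measure_alt2[OF A])
  also have "\<dots> = (\<integral>\<^sup>+u. ennreal (Phi (u / \<rho>)) \<partial>?P1)"
    using measure_normal_atMost[OF assms(2), of 0]
    by (intro nn_integral_cong) (simp add: P2.emeasure_eq_measure vimage_def atMost_def)
  also have "\<dots> = ennreal (\<integral>u. Phi (u / \<rho>) \<partial>?P1)"
    using Phi_scaled_measurable[of \<rho>]
    by (intro nn_integral_eq_integral P1.integrable_const_bound[where B=1])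
      (auto simp: Phi_nonneg Phi_le_1)
  finally show ?thesis
    by (simp add: M.emeasure_eq_measure integral_nonneg_AE Phi_nonneg)
qed

lemma integral_Phi_normal:
  assumes "0 < \<sigma>" and "0 < \<rho>"
  shows "(\<integral>u. Phi (u / \<rho>) \<partial>normal_measure \<mu> \<sigma>) = Phi (\<mu> / sqrt (\<sigma>\<^sup>2 + \<rho>\<^sup>2))"
  using measure_pair_normal_le[OF assms] measure_pair_normal_le_eq_integral[OF assms] by simp

lemma integral_data_measure_component:
  fixes f :: "real \<Rightarrow> real"
  assumes "\<forall>i\<in>Sc. 0 < sd i" and "j \<in> Sc" and "f \<in> borel_measurable borel"
  shows "(\<integral>u. f (u j) \<partial>data_measure sd mu Sc) = (\<integral>x. f x \<partial>normal_measure (mu j) (sd j))"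
proof -
  have "distr (data_measure sd mu Sc) (normal_measure (mu j) (sd j)) (\<lambda>\<omega>. \<omega> j)
      = normal_measure (mu j) (sd j)"
    unfolding data_measure_def
    by (rule distr_PiM_component[of Sc "\<lambda>i. normal_measure (mu i) (sd i)" j, simplified])
      (use assms prob_space_normal_density in auto)
  moreover have "(\<lambda>\<omega>. \<omega> j) \<in> measurable (data_measure sd mu Sc) (normal_measure (mu j) (sd j))"
    unfolding data_measure_def using assms(2) by (rule measurable_component_singleton)
  ultimately show ?thesis
    using assms(3) integral_distr[of "\<lambda>\<omega>. \<omega> j" "data_measure sd mu Sc"
        "normal_measure (mu j) (sd j)" f]
    by simp
qed

lemma integral_Phi_data_measure:
  assumes "\<forall>i\<in>Sc. 0 < sd i" and "j \<in> Sc" and "0 < r"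
  shows "(\<integral>u. Phi (u j / r) \<partial>data_measure sd mu Sc) = Phi (mu j / sqrt ((sd j)\<^sup>2 + r\<^sup>2))"
  using integral_data_measure_component[OF assms(1,2) Phi_scaled_measurable[of r]]
    integral_Phi_normal[of "sd j" r "mu j"] assms
  by simp

section \<open>Minimax regret of nearest-neighbour extrapolation\<close>

lemma NN_nearest_neighbour:
  assumes "finite Sc" and "Sc \<noteq> {}"
  shows "NN X Sc s \<in> Sc" and "\<forall>i\<in>Sc. dist (X s) (X (NN X Sc s)) \<le> dist (X s) (X i)"
proof -
  let ?P = "\<lambda>j. j \<in> Sc \<and> (\<forall>i\<in>Sc. dist (X s) (X j) \<le> dist (X s) (X i))"
  have "Min ((\<lambda>i. dist (X s) (X i)) ` Sc) \<in> (\<lambda>i. dist (X s) (X i)) ` Sc"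
    using assms by (intro Min_in) auto
  then obtain j where "j \<in> Sc" "dist (X s) (X j) = Min ((\<lambda>i. dist (X s) (X i)) ` Sc)"
    by auto
  then have "?P j" using assms by auto
  then have "?P (LEAST j. ?P j)" by (rule LeastI)
  then show "NN X Sc s \<in> Sc" "\<forall>i\<in>Sc. dist (X s) (X (NN X Sc s)) \<le> dist (X s) (X i)"
    unfolding NN_def by auto
qed

lemma infdist_eq_dist_NN:
  assumes "finite Sc" and "Sc \<noteq> {}"
  shows "infdist (X s) (X ` Sc) = dist (X s) (X (NN X Sc s))"
proof (rule antisym)
  show "infdist (X s) (X ` Sc) \<le> dist (X s) (X (NN X Sc s))"
    using NN_nearest_neighbour(1)[OF assms] by (intro infdist_le) auto
  show "dist (X s) (X (NN X Sc s)) \<le> infdist (X s) (X ` Sc)"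
    using assms NN_nearest_neighbour(2)[OF assms]
    by (subst infdist_notempty) (auto intro!: cINF_greatest)
qed

lemma lipschitz_on_infdist: "1-lipschitz_on U (\<lambda>x. infdist x A)"
  by (rule lipschitz_onI) (simp_all add: dist_real_def infdist_triangle_abs)

lemma minimax_regret_le_of_rule:
  assumes "T \<in> half_rules SP Sc"
    and "\<And>tau. C-lipschitz_on UNIV tau \<Longrightarrow> regret SP X sdv Sc T tau \<le> V"
  shows "minimax_regret C SP X sdv Sc \<le> ereal V"
  unfolding minimax_regret_def using assms by (intro INF_lower2[OF assms(1)] SUP_least) auto

lemma minimax_regret_ge_of_witness:
  assumes "C-lipschitz_on UNIV tau"
    and "\<And>T. T \<in> half_rules SP Sc \<Longrightarrow> V \<le> regret SP X sdv Sc T tau"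
  shows "ereal V \<le> minimax_regret C SP X sdv Sc"
  unfolding minimax_regret_def using assms by (intro INF_greatest SUP_upper2[of tau]) auto

lemma probit_rule_in_half_rules:
  assumes "\<forall>s\<in>SP. N s \<in> Sc \<and> 0 < \<rho> s"
  shows "(\<lambda>u s. Phi (u (N s) / \<rho> s)) \<in> half_rules SP Sc"
  unfolding half_rules_def treatment_rule_def
proof (intro CollectI conjI ballI allI impI)
  fix s assume "s \<in> SP"
  then have "N s \<in> Sc" using assms by blast
  then show "(\<lambda>u. Phi (u (N s) / \<rho> s)) \<in> borel_measurable (PiM Sc (\<lambda>_. borel))"
    using measurable_compose[OF measurable_component_singleton[of "N s" Sc "\<lambda>_. borel"]
        Phi_scaled_measurable[of "\<rho> s"]]
    by simp
next
  fix sd :: "nat \<Rightarrow> real" and s assume "\<forall>i\<in>Sc. 0 < sd i" and "s \<in> SP"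
  then show "(\<integral>u. Phi (u (N s) / \<rho> s) \<partial>data_measure sd (\<lambda>_. 0) Sc) = 1/2"
    using assms integral_Phi_data_measure[of Sc sd "N s" "\<rho> s" "\<lambda>_. 0"] Phi_0 by simp
qed (simp_all add: Phi_nonneg Phi_le_1)

lemma exists_noise_level:
  fixes \<sigma> b :: real
  assumes "0 \<le> \<sigma>" and "\<sigma> < b"
  shows "\<exists>\<rho>>0. sqrt (\<sigma>\<^sup>2 + \<rho>\<^sup>2) = b"
proof (intro exI conjI)
  have "\<sigma>\<^sup>2 < b\<^sup>2" using assms by (intro power_strict_mono) auto
  then show "0 < sqrt (b\<^sup>2 - \<sigma>\<^sup>2)" by simp
  show "sqrt (\<sigma>\<^sup>2 + (sqrt (b\<^sup>2 - \<sigma>\<^sup>2))\<^sup>2) = b"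
    using \<open>\<sigma>\<^sup>2 < b\<^sup>2\<close> assms by simp
qed

lemma regret_probit_rule_le:
  assumes "\<forall>i\<in>Sc. 0 < sdv i"
    and "\<forall>s\<in>SP. N s \<in> Sc \<and> 0 < \<rho> s \<and> sqrt ((sdv (N s))\<^sup>2 + (\<rho> s)\<^sup>2) = a s / sqrt (pi / 2)"
    and "\<forall>s\<in>SP. 0 < a s \<and> \<bar>tau (X s) - tau (X (N s))\<bar> \<le> a s"
  shows "regret SP X sdv Sc (\<lambda>u s. Phi (u (N s) / \<rho> s)) tau
    \<le> (1 / real (card SP)) * (\<Sum>s\<in>SP. a s / 2)"
  unfolding regret_def
proof (intro mult_left_mono sum_mono)
  fix s assume s: "s \<in> SP"
  then have "(\<integral>u. Phi (u (N s) / \<rho> s) \<partial>data_measure sdv (\<lambda>i. tau (X i)) Sc)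
      = Phi (sqrt (pi / 2) * tau (X (N s)) / a s)"
    using integral_Phi_data_measure[OF assms(1), of "N s" "\<rho> s"] assms(2) by (simp add: mult.commute)
  then show "tau (X s) * ((if tau (X s) \<ge> 0 then 1 else 0)
      - (\<integral>u. Phi (u (N s) / \<rho> s) \<partial>data_measure sdv (\<lambda>i. tau (X i)) Sc)) \<le> a s / 2"
    using regret_at_site_le[of "a s" "tau (X s)" "tau (X (N s))"] assms(3) s by simp
qed simp

text \<open>The witness rule treats \<open>s\<close> with probability \<open>\<Phi>(u\<^sub>N\<^sub>(\<^sub>s\<^sub>) / \<rho>\<^sub>s)\<close>, where
  \<open>\<sqrt>(\<sigma>\<^sub>N\<^sub>(\<^sub>s\<^sub>)\<^sup>2 + \<rho>\<^sub>s\<^sup>2) = C dist(X\<^sub>s, X\<^sub>N\<^sub>(\<^sub>s\<^sub>)) / \<sqrt>(\<pi>/2)\<close>; the hypothesis is what makes such \<open>\<rho>\<^sub>s > 0\<close> exist.\<close>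
lemma minimax_regret_le_NN:
  fixes X :: "nat \<Rightarrow> 'a::metric_space"
  assumes "finite Sc" "Sc \<noteq> {}" "\<forall>i\<in>Sc. 0 < sdv i"
    and gap: "\<forall>s\<in>SP. sqrt (pi / 2) * sdv (NN X Sc s) < C * dist (X s) (X (NN X Sc s))"
  shows "minimax_regret C SP X sdv Sc
    \<le> ereal (C / 2 * (1 / real (card SP)) * (\<Sum>s\<in>SP. dist (X s) (X (NN X Sc s))))"
proof -
  define N where "N = NN X Sc"
  define a where "a s = C * dist (X s) (X (N s))" for s
  have N: "N s \<in> Sc" for s
    unfolding N_def using NN_nearest_neighbour(1)[OF assms(1,2)] .
  have sdv_pos: "0 < sqrt (pi / 2) * sdv (N s)" for s
    using assms(3) N[of s] by simp
  have "\<forall>s\<in>SP. \<exists>r>0. sqrt ((sdv (N s))\<^sup>2 + r\<^sup>2) = a s / sqrt (pi / 2)"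
  proof
    fix s assume "s \<in> SP"
    then have "sdv (N s) < a s / sqrt (pi / 2)"
      using gap by (simp add: a_def N_def pos_less_divide_eq mult.commute)
    then show "\<exists>r>0. sqrt ((sdv (N s))\<^sup>2 + r\<^sup>2) = a s / sqrt (pi / 2)"
      using assms(3) N[of s] by (intro exists_noise_level) (simp_all add: less_imp_le)
  qed
  then obtain \<rho> where \<rho>: "\<forall>s\<in>SP. 0 < \<rho> s \<and> sqrt ((sdv (N s))\<^sup>2 + (\<rho> s)\<^sup>2) = a s / sqrt (pi / 2)"
    by (metis bchoice)
  show ?thesis
  proof (rule minimax_regret_le_of_rule)
    show "(\<lambda>u s. Phi (u (N s) / \<rho> s)) \<in> half_rules SP Sc"
      using \<rho> N by (intro probit_rule_in_half_rules) simp
    fix tau :: "'a \<Rightarrow> real" assume tau: "C-lipschitz_on UNIV tau"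
    have "\<forall>s\<in>SP. 0 < a s \<and> \<bar>tau (X s) - tau (X (N s))\<bar> \<le> a s"
    proof
      fix s assume "s \<in> SP"
      then show "0 < a s \<and> \<bar>tau (X s) - tau (X (N s))\<bar> \<le> a s"
        using gap sdv_pos[of s] lipschitz_onD[OF tau, of "X s" "X (N s)"]
        by (auto simp: a_def N_def dist_real_def)
    qed
    with \<rho> N have "regret SP X sdv Sc (\<lambda>u s. Phi (u (N s) / \<rho> s)) tau
        \<le> (1 / real (card SP)) * (\<Sum>s\<in>SP. a s / 2)"
      by (intro regret_probit_rule_le assms(3)) auto
    also have "\<dots> = C / 2 * (1 / real (card SP)) * (\<Sum>s\<in>SP. dist (X s) (X (NN X Sc s)))"
      unfolding a_def N_def by (simp add: sum_distrib_left[symmetric] sum_divide_distrib[symmetric])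
    finally show "regret SP X sdv Sc (\<lambda>u s. Phi (u (N s) / \<rho> s)) tau
        \<le> C / 2 * (1 / real (card SP)) * (\<Sum>s\<in>SP. dist (X s) (X (NN X Sc s)))" .
  qed
qed

text \<open>The witness \<open>C \<cdot> dist(\<cdot>, X`Sc)\<close> vanishes on \<open>Sc\<close>, so the data are pure noise.\<close>
lemma minimax_regret_ge_NN:
  fixes X :: "nat \<Rightarrow> 'a::metric_space"
  assumes "finite Sc" "Sc \<noteq> {}" "\<forall>i\<in>Sc. 0 < sdv i" and "0 \<le> C"
  shows "ereal (C / 2 * (1 / real (card SP)) * (\<Sum>s\<in>SP. dist (X s) (X (NN X Sc s))))
    \<le> minimax_regret C SP X sdv Sc"
proof -
  define tau where "tau x = C * infdist x (X ` Sc)" for x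
  have "(C * 1)-lipschitz_on UNIV tau"
    unfolding tau_def using assms(4) by (intro lipschitz_on_cmult_real_nonneg lipschitz_on_infdist)
  moreover have "C / 2 * (1 / real (card SP)) * (\<Sum>s\<in>SP. dist (X s) (X (NN X Sc s)))
      \<le> regret SP X sdv Sc T tau" if T: "T \<in> half_rules SP Sc" for T
  proof -
    have "data_measure sdv (\<lambda>i. tau (X i)) Sc = data_measure sdv (\<lambda>_. 0) Sc"
      unfolding data_measure_def tau_def by (rule PiM_cong) auto
    moreover have "(\<integral>u. T u s \<partial>data_measure sdv (\<lambda>_. 0) Sc) = 1/2" if "s \<in> SP" for s
      using T assms(3) that unfolding half_rules_def by blast
    moreover have "tau (X s) = C * dist (X s) (X (NN X Sc s))" for s
      unfolding tau_def using infdist_eq_dist_NN[OF assms(1,2), of X s] by simp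
    ultimately have "tau (X s) * ((if tau (X s) \<ge> 0 then 1 else 0)
        - (\<integral>u. T u s \<partial>data_measure sdv (\<lambda>i. tau (X i)) Sc))
        = C / 2 * dist (X s) (X (NN X Sc s))" if "s \<in> SP" for s
      using assms(4) that by simp
    then have "regret SP X sdv Sc T tau
        = (1 / real (card SP)) * (\<Sum>s\<in>SP. C / 2 * dist (X s) (X (NN X Sc s)))"
      unfolding regret_def by (intro arg_cong[where f="(*) (1 / real (card SP))"] sum.cong) simp_all
    then show ?thesis
      by (simp only: sum_distrib_left[symmetric] mult_ac order_refl)
  qed
  ultimately show ?thesis
    by (intro minimax_regret_ge_of_witness[of C tau]) simp_all
qed

lemma minimax_regret_eq_NN:
  fixes X :: "nat \<Rightarrow> 'a::metric_space"
  assumes "finite Sc" "Sc \<noteq> {}" "\<forall>i\<in>Sc. 0 < sdv i" and "0 \<le> C"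
    and "\<forall>s\<in>SP. sqrt (pi / 2) * sdv (NN X Sc s) < C * dist (X s) (X (NN X Sc s))"
  shows "minimax_regret C SP X sdv Sc
    = ereal (C / 2 * (1 / real (card SP)) * (\<Sum>s\<in>SP. dist (X s) (X (NN X Sc s))))"
  using minimax_regret_le_NN[OF assms(1-3,5)] minimax_regret_ge_NN[OF assms(1-4)]
  by (rule antisym)

lemma Cstar_ge:
  assumes "finite SE" "finite SP" "Sc \<in> Acal SE k" "Sc \<noteq> {}" "s \<in> SP - Sc"
  shows "sqrt (pi / 2) * sdv (NN X Sc s) / norm (X s - X (NN X Sc s)) \<le> Cstar SE SP k X sdv"
  unfolding Cstar_def
proof (rule Max_ge)
  let ?r = "\<lambda>Sc s. sqrt (pi / 2) * sdv (NN X Sc s) / norm (X s - X (NN X Sc s))"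
  have "{?r Sc s | Sc s. Sc \<in> Acal SE k \<and> Sc \<noteq> {} \<and> s \<in> SP - Sc}
      \<subseteq> (\<lambda>p. ?r (fst p) (snd p)) ` (Pow SE \<times> SP)"
    unfolding Acal_def by force
  then show "finite {?r Sc s | Sc s. Sc \<in> Acal SE k \<and> Sc \<noteq> {} \<and> s \<in> SP - Sc}"
    by (rule finite_subset) (use assms(1,2) in simp)
qed (use assms(3-5) in blast)

lemma minimax_regret_eq_of_Cstar_less:
  fixes X :: "nat \<Rightarrow> 'a::real_normed_vector"
  assumes fin: "finite SE" "finite SP" and disj: "SE \<inter> SP = {}"
    and inj: "inj_on X (SE \<union> SP)" and sdv: "\<forall>i\<in>SE. 0 < sdv i"
    and C: "0 \<le> C" "Cstar SE SP k X sdv < C" and Sc: "Sc \<in> Acal SE k" "Sc \<noteq> {}"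
  shows "minimax_regret C SP X sdv Sc
    = ereal (C / 2 * (1 / real (card SP)) * (\<Sum>s\<in>SP. norm (X s - X (NN X Sc s))))"
proof -
  have Sc_sub: "Sc \<subseteq> SE" and "finite Sc"
    using Sc fin(1) finite_subset unfolding Acal_def by blast+
  have gap: "\<forall>s\<in>SP. sqrt (pi / 2) * sdv (NN X Sc s) < C * dist (X s) (X (NN X Sc s))"
  proof
    fix s assume s: "s \<in> SP"
    have "NN X Sc s \<in> SE" "s \<notin> SE"
      using NN_nearest_neighbour(1)[OF \<open>finite Sc\<close> Sc(2)] Sc_sub s disj by blast+
    then have "X s \<noteq> X (NN X Sc s)"
      using inj_onD[OF inj, of s "NN X Sc s"] s by auto
    moreover have "sqrt (pi / 2) * sdv (NN X Sc s) / norm (X s - X (NN X Sc s)) < C"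
      using Cstar_ge[OF fin Sc, of s sdv X] C(2) s \<open>s \<notin> SE\<close> Sc_sub by force
    ultimately show "sqrt (pi / 2) * sdv (NN X Sc s) < C * dist (X s) (X (NN X Sc s))"
      by (simp add: dist_norm pos_divide_less_eq)
  qed
  have "\<forall>i\<in>Sc. 0 < sdv i"
    using sdv Sc_sub by blast
  from minimax_regret_eq_NN[OF \<open>finite Sc\<close> Sc(2) this C(1) gap] show ?thesis
    by (simp add: dist_norm)
qed

theorem mainTheorem4:
  fixes nS k :: nat and SE SP :: "nat set" and X :: "nat \<Rightarrow> real^'d"
    and sdv :: "nat \<Rightarrow> real" and C :: real and tau0 :: "real^'d \<Rightarrow> real"
  assumes SE_sub: "SE \<subseteq> {1..nS}" and SE_card: "card SE \<ge> 2"
    and SP_sub: "SP \<subseteq> {1..nS}" and SP_ne: "SP \<noteq> {}"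
    and sigma_pos: "\<forall>s\<in>{1..nS}. sdv s > 0"
    and C_pos: "C > 0"
    and A1: "C-lipschitz_on UNIV tau0"
    and A2: "inj_on X {1..nS}"
    and k_ge: "1 \<le> k" and k_lt: "k < card SE"
    and C_gt: "C > Cstar SE SP k X sdv"
    and disj: "SE \<inter> SP = {}"
  shows "(\<forall>Sc\<in>Acal SE k. Sc \<noteq> {} \<longrightarrow>
            minimax_regret C SP X sdv Sc =
            ereal (C / 2 * (1 / real (card SP)) * (\<Sum>s\<in>SP. norm (X s - X (NN X Sc s)))))
       \<and> (\<forall>Sstar\<in>Acal SE k. Sstar \<noteq> {} \<longrightarrow>
            (\<forall>Sc\<in>Acal SE k. Sc \<noteq> {} \<longrightarrow>
               (\<Sum>s\<in>SP. norm (X s - X (NN X Sstar s))) \<le> (\<Sum>s\<in>SP. norm (X s - X (NN X Sc s)))) \<longrightarrow>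
            (\<forall>Sc\<in>Acal SE k. Sc \<noteq> {} \<longrightarrow>
               minimax_regret C SP X sdv Sstar \<le> minimax_regret C SP X sdv Sc))"
proof -
  have fin: "finite SE" "finite SP"
    using SE_sub SP_sub finite_subset by blast+
  have "inj_on X (SE \<union> SP)"
    using A2 SE_sub SP_sub by (auto intro: inj_on_subset)
  moreover have "\<forall>i\<in>SE. 0 < sdv i"
    using sigma_pos SE_sub by blast
  ultimately have eq: "minimax_regret C SP X sdv Sc
      = ereal (C / 2 * (1 / real (card SP)) * (\<Sum>s\<in>SP. norm (X s - X (NN X Sc s))))"
    if "Sc \<in> Acal SE k" "Sc \<noteq> {}" for Sc
    by (rule minimax_regret_eq_of_Cstar_less[OF fin disj _ _ less_imp_le[OF C_pos] C_gt that])
  show ?thesis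
  proof (intro conjI ballI impI)
    fix Sstar Sc
    assume Sstar: "Sstar \<in> Acal SE k" "Sstar \<noteq> {}" and Sc: "Sc \<in> Acal SE k" "Sc \<noteq> {}"
      and "\<forall>Sc\<in>Acal SE k. Sc \<noteq> {} \<longrightarrow>
        (\<Sum>s\<in>SP. norm (X s - X (NN X Sstar s))) \<le> (\<Sum>s\<in>SP. norm (X s - X (NN X Sc s)))"
    then have "C / 2 * (1 / real (card SP)) * (\<Sum>s\<in>SP. norm (X s - X (NN X Sstar s)))
        \<le> C / 2 * (1 / real (card SP)) * (\<Sum>s\<in>SP. norm (X s - X (NN X Sc s)))"
      using C_pos by (intro mult_left_mono) simp_all
    then show "minimax_regret C SP X sdv Sstar \<le> minimax_regret C SP X sdv Sc"
      using eq[OF Sstar] eq[OF Sc] by simp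
  qed (rule eq)
qed

end
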